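(* Let $X$ be a Banach space with norm $\|\cdot\|$ and $d\in\mathbb{N}$. For $k\in\mathbb{N}$ let $$F_k=\Big\{x=(x_\alpha)_{\alpha\in\mathbb{N}_0^d}\in X^{\mathbb{N}_0^d}\,:\, \|x\|_k:=\sup_\alpha \|x_\alpha\|\, k^{-|\alpha|}< +\infty\Big\},$$ a Banach space with norm $\|\cdot\|_k$, and let $F=\varinjlim_{k\to+\infty} F_k$ be the inductive limit (locally convex inductive limit topology). For every sequence $\delta=(\delta_n)_{n\in\mathbb{N}}$ of positive real numbers converging to $0$, define on $F$ the norm $$|x|_\delta = \sup_{\alpha\in\mathbb{N}_0^d} \|x_\alpha\|\, \delta_{|\alpha|}^{|\alpha|}.$$ Then the norms $|\cdot|_\delta$, where $\delta$ runs through all positive null-sequences, form a fundamental system of (continuous) seminorms on $F$.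
   Context: For a multi-index $\alpha\in\mathbb{N}_0^d$, $|\alpha|=\alpha_1+\dots+\alpha_d$; the convention $\delta_0^0=1$ is used for $\alpha=0$. *)

theory Defs
  imports "HOL-Analysis.Analysis"
begin

text \<open>Multi-indices in N_0^d are functions 'd => nat for a finite index type 'd
  with CARD('d) = d. Sequences x = (x_alpha) are functions ('d => nat) => 'a.\<close>

definition mlen :: "('d::finite \<Rightarrow> nat) \<Rightarrow> nat" where
  "mlen \<alpha> = (\<Sum>i\<in>UNIV. \<alpha> i)"

definition in_Fk :: "nat \<Rightarrow> (('d::finite \<Rightarrow> nat) \<Rightarrow> 'a::real_normed_vector) \<Rightarrow> bool" where
  "in_Fk k x \<longleftrightarrow> bdd_above (range (\<lambda>\<alpha>. norm (x \<alpha>) / real k ^ mlen \<alpha>))"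

definition normk :: "nat \<Rightarrow> (('d::finite \<Rightarrow> nat) \<Rightarrow> 'a::real_normed_vector) \<Rightarrow> real" where
  "normk k x = (SUP \<alpha>. norm (x \<alpha>) / real k ^ mlen \<alpha>)"

definition Fspace :: "(('d::finite \<Rightarrow> nat) \<Rightarrow> 'a::real_normed_vector) set" where
  "Fspace = {x. \<exists>k\<ge>1. in_Fk k x}"

definition delta_norm :: "(nat \<Rightarrow> real) \<Rightarrow> (('d::finite \<Rightarrow> nat) \<Rightarrow> 'a::real_normed_vector) \<Rightarrow> real" where
  "delta_norm \<delta> x = (SUP \<alpha>. norm (x \<alpha>) * \<delta> (mlen \<alpha>) ^ mlen \<alpha>)"

definition seminorm_on_F :: "((('d::finite \<Rightarrow> nat) \<Rightarrow> 'a::real_normed_vector) \<Rightarrow> real) \<Rightarrow> bool" where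
  "seminorm_on_F p \<longleftrightarrow>
     (\<forall>x\<in>Fspace. 0 \<le> p x) \<and>
     (\<forall>x\<in>Fspace. \<forall>y\<in>Fspace. p (\<lambda>\<alpha>. x \<alpha> + y \<alpha>) \<le> p x + p y) \<and>
     (\<forall>x\<in>Fspace. \<forall>c::real. p (\<lambda>\<alpha>. c *\<^sub>R x \<alpha>) = \<bar>c\<bar> * p x)"

text \<open>A seminorm on the locally convex inductive limit F is continuous iff its restriction
  to each step F_k is continuous for the Banach norm normk k, i.e. bounded by a multiple of it.\<close>
definition continuous_seminorm_on_F :: "((('d::finite \<Rightarrow> nat) \<Rightarrow> 'a::real_normed_vector) \<Rightarrow> real) \<Rightarrow> bool" where
  "continuous_seminorm_on_F p \<longleftrightarrow> seminorm_on_F p \<and>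
     (\<forall>k\<ge>1. \<exists>C. \<forall>x. in_Fk k x \<longrightarrow> p x \<le> C * normk k x)"

end

theory Submission
  imports Defs
begin

text \<open>
  Each \<open>|\<cdot>|\<^sub>\<delta>\<close> is continuous on the step \<open>F\<^sub>k\<close>, since
  \<open>|x|\<^sub>\<delta> \<le> (sup\<^sub>n (k \<delta>\<^sub>n)\<^sup>n) \<parallel>x\<parallel>\<^sub>k\<close> and \<open>k \<delta>\<^sub>n \<rightarrow> 0\<close>.
  Conversely, let \<open>p \<le> D\<^sub>k \<parallel>\<cdot>\<parallel>\<^sub>k\<close> on \<open>F\<^sub>k\<close> with \<open>D\<^sub>k \<ge> 1\<close>, and let \<open>\<delta>\<^sub>n = 4/j\<close> for the
  largest \<open>j \<le> n\<close> with \<open>D\<^sub>j \<le> 2\<^sup>n\<close>. Every fixed \<open>j\<close> qualifies for large \<open>n\<close>, so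
  \<open>\<delta>\<^sub>n \<rightarrow> 0\<close>, and \<open>D\<^sub>j j\<^sup>-\<^sup>n \<le> D\<^sub>1 (\<delta>\<^sub>n/2)\<^sup>n\<close>. Measuring the part of \<open>x\<close> of degree \<open>n\<close> in
  \<open>F\<^sub>j\<close> therefore gives \<open>p \<le> D\<^sub>1 2\<^sup>-\<^sup>n |x|\<^sub>\<delta>\<close>; the parts of degree \<open>\<le> N\<close> contribute at most
  \<open>2 D\<^sub>1 |x|\<^sub>\<delta>\<close>, and the part of degree \<open>> N\<close> has norm at most \<open>2\<^sup>-\<^sup>N\<^sup>-\<^sup>1 \<parallel>x\<parallel>\<^sub>k\<close> in
  \<open>F\<^sub>2\<^sub>k\<close>, which vanishes as \<open>N \<rightarrow> \<infinity>\<close>.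
\<close>

lemma normk_upper:
  assumes "in_Fk k x"
  shows "norm (x \<alpha>) / real k ^ mlen \<alpha> \<le> normk k x"
  using assms unfolding in_Fk_def normk_def by (intro cSUP_upper) auto

lemma normk_nonneg:
  assumes "in_Fk k x"
  shows "0 \<le> normk k x"
  using normk_upper[OF assms, of undefined]
  by (meson order_trans divide_nonneg_nonneg norm_ge_zero zero_le_power of_nat_0_le_iff)

lemma in_Fk_normk_le:
  assumes "\<And>\<alpha>. norm (x \<alpha>) / real k ^ mlen \<alpha> \<le> B"
  shows "in_Fk k x" and "normk k x \<le> B"
proof -
  show "in_Fk k x" unfolding in_Fk_def bdd_above_def using assms by blast
  show "normk k x \<le> B" unfolding normk_def by (rule cSUP_least) (use assms in auto)
qed

lemma in_Fk_dominated:
  assumes "in_Fk k x" and "\<And>\<alpha>. norm (y \<alpha>) \<le> norm (x \<alpha>)"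
  shows "in_Fk k y"
proof (rule in_Fk_normk_le(1))
  fix \<alpha>
  have "norm (y \<alpha>) / real k ^ mlen \<alpha> \<le> norm (x \<alpha>) / real k ^ mlen \<alpha>"
    by (rule divide_right_mono) (use assms in auto)
  also have "\<dots> \<le> normk k x" by (rule normk_upper[OF assms(1)])
  finally show "norm (y \<alpha>) / real k ^ mlen \<alpha> \<le> normk k x" .
qed

lemma FspaceI: "in_Fk k x \<Longrightarrow> 1 \<le> k \<Longrightarrow> x \<in> Fspace"
  unfolding Fspace_def by blast

lemma Fspace_scaleR:
  assumes "x \<in> Fspace"
  shows "(\<lambda>\<alpha>. c *\<^sub>R x \<alpha>) \<in> Fspace"
proof -
  obtain k where k: "1 \<le> k" "in_Fk k x" using assms unfolding Fspace_def by blast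
  have "in_Fk k (\<lambda>\<alpha>. c *\<^sub>R x \<alpha>)"
  proof (rule in_Fk_normk_le(1))
    fix \<alpha>
    show "norm (c *\<^sub>R x \<alpha>) / real k ^ mlen \<alpha> \<le> \<bar>c\<bar> * normk k x"
      using mult_left_mono[OF normk_upper[OF k(2), of \<alpha>], of "\<bar>c\<bar>"] by simp
  qed
  then show ?thesis using k(1) by (rule FspaceI)
qed

lemma Bseq_power_null:
  fixes \<delta> :: "nat \<Rightarrow> real"
  assumes "\<delta> \<longlonglongrightarrow> 0"
  shows "Bseq (\<lambda>n. (c * \<delta> n) ^ n)"
proof (rule Bseq_eventually_mono[OF _ Bfun_const])
  have "(\<lambda>n. c * \<delta> n) \<longlonglongrightarrow> 0" using tendsto_mult_right_zero[OF assms] by simp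
  then have "eventually (\<lambda>n. norm (c * \<delta> n) < 1) sequentially"
    using tendsto_norm_zero order_tendstoD(2) zero_less_one by blast
  then show "eventually (\<lambda>n. norm ((c * \<delta> n) ^ n) \<le> norm (1::real)) sequentially"
  proof eventually_elim
    case (elim n)
    then show ?case unfolding real_norm_def power_abs abs_one by (intro power_le_one) auto
  qed
qed

lemma delta_norm_term_le:
  assumes "in_Fk k x" and "1 \<le> k" and "\<And>n. 0 \<le> \<delta> n" and "\<And>n. (real k * \<delta> n) ^ n \<le> B"
  shows "norm (x \<alpha>) * \<delta> (mlen \<alpha>) ^ mlen \<alpha> \<le> B * normk k x"
proof -
  define n where "n = mlen \<alpha>"
  have "norm (x \<alpha>) * \<delta> n ^ n = (norm (x \<alpha>) / real k ^ n) * (real k * \<delta> n) ^ n"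
    using assms(2) by (simp add: power_mult_distrib)
  also have "\<dots> \<le> normk k x * B"
    using normk_upper[OF assms(1), of \<alpha>] normk_nonneg[OF assms(1)] assms(3,4)
    by (intro mult_mono) (auto simp: n_def)
  finally show ?thesis by (simp add: n_def mult.commute)
qed

lemma delta_norm_terms_bdd_on_Fk:
  fixes \<delta> :: "nat \<Rightarrow> real"
  assumes "in_Fk k x" and "1 \<le> k" and "\<And>n. 0 \<le> \<delta> n" and "\<delta> \<longlonglongrightarrow> 0"
  shows "bdd_above (range (\<lambda>\<alpha>. norm (x \<alpha>) * \<delta> (mlen \<alpha>) ^ mlen \<alpha>))"
proof -
  obtain B where B: "\<And>n. (real k * \<delta> n) ^ n \<le> B"
    using Bseq_bdd_above[OF Bseq_power_null[OF assms(4)]] by (auto simp: bdd_above_def)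
  show ?thesis
    using delta_norm_term_le[OF assms(1-3) B] by (auto simp: bdd_above_def)
qed

lemma delta_norm_le_normk:
  fixes \<delta> :: "nat \<Rightarrow> real"
  assumes "1 \<le> k" and "\<And>n. 0 \<le> \<delta> n" and "\<delta> \<longlonglongrightarrow> 0"
  shows "\<exists>B. \<forall>x. in_Fk k x \<longrightarrow> delta_norm \<delta> x \<le> B * normk k x"
proof -
  obtain B where B: "\<And>n. (real k * \<delta> n) ^ n \<le> B"
    using Bseq_bdd_above[OF Bseq_power_null[OF assms(3)]] by (auto simp: bdd_above_def)
  have "delta_norm \<delta> x \<le> B * normk k x" if "in_Fk k x" for x
    unfolding delta_norm_def
    by (rule cSUP_least) (use delta_norm_term_le[OF that assms(1,2) B] in auto)
  then show ?thesis by blast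
qed

lemma delta_norm_upper:
  fixes \<delta> :: "nat \<Rightarrow> real"
  assumes "x \<in> Fspace" and "\<And>n. 0 \<le> \<delta> n" and "\<delta> \<longlonglongrightarrow> 0"
  shows "norm (x \<alpha>) * \<delta> (mlen \<alpha>) ^ mlen \<alpha> \<le> delta_norm \<delta> x"
proof -
  obtain k where k: "1 \<le> k" "in_Fk k x" using assms(1) unfolding Fspace_def by blast
  show ?thesis unfolding delta_norm_def
    using delta_norm_terms_bdd_on_Fk[OF k(2,1) assms(2,3)] by (intro cSUP_upper) auto
qed

lemma delta_norm_nonneg:
  fixes \<delta> :: "nat \<Rightarrow> real"
  assumes "x \<in> Fspace" and "\<And>n. 0 \<le> \<delta> n" and "\<delta> \<longlonglongrightarrow> 0"
  shows "0 \<le> delta_norm \<delta> x"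
  using delta_norm_upper[OF assms, of undefined] assms(2)
  by (meson order_trans mult_nonneg_nonneg norm_ge_zero zero_le_power)

lemma delta_norm_add_le:
  fixes \<delta> :: "nat \<Rightarrow> real"
  assumes "x \<in> Fspace" and "y \<in> Fspace" and "\<And>n. 0 \<le> \<delta> n" and "\<delta> \<longlonglongrightarrow> 0"
  shows "delta_norm \<delta> (\<lambda>\<alpha>. x \<alpha> + y \<alpha>) \<le> delta_norm \<delta> x + delta_norm \<delta> y"
  unfolding delta_norm_def[of _ "\<lambda>\<alpha>. x \<alpha> + y \<alpha>"]
proof (rule cSUP_least)
  fix \<alpha>
  have "norm (x \<alpha> + y \<alpha>) * \<delta> (mlen \<alpha>) ^ mlen \<alpha>
      \<le> norm (x \<alpha>) * \<delta> (mlen \<alpha>) ^ mlen \<alpha> + norm (y \<alpha>) * \<delta> (mlen \<alpha>) ^ mlen \<alpha>"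
    using mult_right_mono[OF norm_triangle_ineq zero_le_power[OF assms(3)]] by (simp add: distrib_right)
  also have "\<dots> \<le> delta_norm \<delta> x + delta_norm \<delta> y"
    using delta_norm_upper[OF assms(1,3,4)] delta_norm_upper[OF assms(2,3,4)] by (rule add_mono)
  finally show "norm (x \<alpha> + y \<alpha>) * \<delta> (mlen \<alpha>) ^ mlen \<alpha> \<le> delta_norm \<delta> x + delta_norm \<delta> y" .
qed simp

lemma delta_norm_scaleR_le:
  fixes \<delta> :: "nat \<Rightarrow> real"
  assumes "x \<in> Fspace" and "\<And>n. 0 \<le> \<delta> n" and "\<delta> \<longlonglongrightarrow> 0"
  shows "delta_norm \<delta> (\<lambda>\<alpha>. c *\<^sub>R x \<alpha>) \<le> \<bar>c\<bar> * delta_norm \<delta> x"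
  unfolding delta_norm_def[of _ "\<lambda>\<alpha>. c *\<^sub>R x \<alpha>"]
  using mult_left_mono[OF delta_norm_upper[OF assms], of "\<bar>c\<bar>"]
  by (intro cSUP_least) (auto simp: mult.assoc)

lemma delta_norm_scaleR:
  fixes \<delta> :: "nat \<Rightarrow> real"
  assumes "x \<in> Fspace" and "\<And>n. 0 \<le> \<delta> n" and "\<delta> \<longlonglongrightarrow> 0"
  shows "delta_norm \<delta> (\<lambda>\<alpha>. c *\<^sub>R x \<alpha>) = \<bar>c\<bar> * delta_norm \<delta> x"
proof (cases "c = 0")
  case True
  then show ?thesis unfolding delta_norm_def by simp
next
  case False
  have "delta_norm \<delta> x = delta_norm \<delta> (\<lambda>\<alpha>. inverse c *\<^sub>R (c *\<^sub>R x \<alpha>))"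
    using False by simp
  also have "\<dots> \<le> \<bar>inverse c\<bar> * delta_norm \<delta> (\<lambda>\<alpha>. c *\<^sub>R x \<alpha>)"
    by (rule delta_norm_scaleR_le[OF Fspace_scaleR[OF assms(1)] assms(2,3)])
  finally have "\<bar>c\<bar> * delta_norm \<delta> x \<le> delta_norm \<delta> (\<lambda>\<alpha>. c *\<^sub>R x \<alpha>)"
    using False by (simp add: field_simps)
  with delta_norm_scaleR_le[OF assms, of c] show ?thesis by linarith
qed

lemma continuous_seminorm_delta_norm:
  fixes \<delta> :: "nat \<Rightarrow> real"
  assumes "\<And>n. 0 \<le> \<delta> n" and "\<delta> \<longlonglongrightarrow> 0"
  shows "continuous_seminorm_on_F (delta_norm \<delta>)"
  unfolding continuous_seminorm_on_F_def seminorm_on_F_def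
  using delta_norm_nonneg[OF _ assms] delta_norm_add_le[OF _ _ assms]
    delta_norm_scaleR[OF _ assms] delta_norm_le_normk[OF _ assms]
  by blast

definition admissible_steps :: "(nat \<Rightarrow> real) \<Rightarrow> nat \<Rightarrow> nat set" where
  "admissible_steps D n = {j. 1 \<le> j \<and> j \<le> n \<and> D j \<le> 2 ^ n}"

definition dominating_weight :: "(nat \<Rightarrow> real) \<Rightarrow> nat \<Rightarrow> real" where
  "dominating_weight D n =
     (if admissible_steps D n = {} then 2 * D 1 else 4 / real (Max (admissible_steps D n)))"

lemma finite_admissible_steps: "finite (admissible_steps D n)"
  by (rule finite_subset[of _ "{..n}"]) (auto simp: admissible_steps_def)

lemma Max_admissible_steps:
  assumes "admissible_steps D n \<noteq> {}"
  shows "1 \<le> Max (admissible_steps D n)" and "D (Max (admissible_steps D n)) \<le> 2 ^ n"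
  using Max_in[OF finite_admissible_steps assms] by (auto simp: admissible_steps_def)

lemma dominating_weight_pos:
  assumes "1 \<le> D 1"
  shows "0 < dominating_weight D n"
proof (cases "admissible_steps D n = {}")
  case False
  then show ?thesis using Max_admissible_steps(1)[OF False] by (simp add: dominating_weight_def)
qed (use assms in \<open>simp add: dominating_weight_def\<close>)

lemma dominating_weight_dominates:
  assumes "1 \<le> D 1"
  shows "\<exists>j\<ge>1. D j / real j ^ n \<le> D 1 * (dominating_weight D n / 2) ^ n"
proof (cases "admissible_steps D n = {}")
  case True
  have "D 1 \<le> D 1 * D 1 ^ n"
    using assms one_le_power[OF assms, of n] by (simp add: mult_le_cancel_left1)
  then show ?thesis using True by (intro exI[of _ 1]) (simp add: dominating_weight_def)
next
  case False
  define J where "J = Max (admissible_steps D n)"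
  have J: "1 \<le> J" "D J \<le> 2 ^ n" using Max_admissible_steps[OF False] by (simp_all add: J_def)
  have "D J / real J ^ n \<le> 2 ^ n / real J ^ n" using J(2) by (simp add: divide_right_mono)
  also have "\<dots> = (dominating_weight D n / 2) ^ n"
    using False by (simp add: dominating_weight_def J_def power_divide)
  also have "\<dots> \<le> D 1 * (dominating_weight D n / 2) ^ n"
    using assms dominating_weight_pos[of D, OF assms, of n] by (simp add: mult_le_cancel_right1)
  finally show ?thesis using J(1) by blast
qed

lemma dominating_weight_null:
  assumes "1 \<le> D 1"
  shows "dominating_weight D \<longlonglongrightarrow> 0"
proof (rule order_tendstoI)
  fix a :: real assume "a < 0"
  then show "eventually (\<lambda>n. a < dominating_weight D n) sequentially"
    using dominating_weight_pos[of D, OF assms] by (intro always_eventually allI) (rule less_trans)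
next
  fix r :: real assume r: "0 < r"
  obtain j :: nat where j: "4 / r < real j" using reals_Archimedean2 by blast
  have "0 < real j" using j divide_pos_pos[of 4 r] r by linarith
  obtain n0 :: nat where n0: "D j < 2 ^ n0" using real_arch_pow[of 2 "D j"] by auto
  have "dominating_weight D n < r" if n: "max j n0 \<le> n" for n
  proof -
    have "(2::real) ^ n0 \<le> 2 ^ n" using n by (intro power_increasing) auto
    then have "D j \<le> 2 ^ n" using n0 by linarith
    then have "j \<in> admissible_steps D n"
      using n n0 \<open>0 < real j\<close> by (simp add: admissible_steps_def)
    then have "admissible_steps D n \<noteq> {}" and "j \<le> Max (admissible_steps D n)"
      using Max_ge[OF finite_admissible_steps] by blast+
    then have "dominating_weight D n \<le> 4 / real j"
      using \<open>0 < real j\<close> by (simp add: dominating_weight_def divide_left_mono)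
    also have "\<dots> < r" using j r \<open>0 < real j\<close> by (simp add: divide_less_eq mult.commute)
    finally show ?thesis .
  qed
  then show "eventually (\<lambda>n. dominating_weight D n < r) sequentially"
    unfolding eventually_sequentially by blast
qed

definition degree_part :: "nat \<Rightarrow> (('d::finite \<Rightarrow> nat) \<Rightarrow> 'a::zero) \<Rightarrow> ('d \<Rightarrow> nat) \<Rightarrow> 'a" where
  "degree_part n x = (\<lambda>\<alpha>. if mlen \<alpha> = n then x \<alpha> else 0)"

definition degree_le_part :: "nat \<Rightarrow> (('d::finite \<Rightarrow> nat) \<Rightarrow> 'a::zero) \<Rightarrow> ('d \<Rightarrow> nat) \<Rightarrow> 'a" where
  "degree_le_part N x = (\<lambda>\<alpha>. if mlen \<alpha> \<le> N then x \<alpha> else 0)"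

definition degree_gt_part :: "nat \<Rightarrow> (('d::finite \<Rightarrow> nat) \<Rightarrow> 'a::zero) \<Rightarrow> ('d \<Rightarrow> nat) \<Rightarrow> 'a" where
  "degree_gt_part N x = (\<lambda>\<alpha>. if mlen \<alpha> \<le> N then 0 else x \<alpha>)"

lemma degree_le_part_0: "degree_le_part 0 x = degree_part 0 x"
  by (auto simp: degree_le_part_def degree_part_def)

lemma degree_le_part_Suc:
  fixes x :: "('d::finite \<Rightarrow> nat) \<Rightarrow> 'a::monoid_add"
  shows "degree_le_part (Suc N) x = (\<lambda>\<alpha>. degree_le_part N x \<alpha> + degree_part (Suc N) x \<alpha>)"
  by (auto simp: degree_le_part_def degree_part_def le_Suc_eq fun_eq_iff)

lemma degree_le_part_add_degree_gt_part:
  fixes x :: "('d::finite \<Rightarrow> nat) \<Rightarrow> 'a::monoid_add"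
  shows "(\<lambda>\<alpha>. degree_le_part N x \<alpha> + degree_gt_part N x \<alpha>) = x"
  by (auto simp: degree_le_part_def degree_gt_part_def fun_eq_iff)

lemma in_Fk_degree_parts:
  assumes "in_Fk k x"
  shows "in_Fk k (degree_part n x)" and "in_Fk k (degree_le_part n x)"
  using assms by (auto intro: in_Fk_dominated simp: degree_part_def degree_le_part_def)

lemma Fspace_degree_parts:
  assumes "x \<in> Fspace"
  shows "degree_part n x \<in> Fspace" and "degree_le_part n x \<in> Fspace"
  using assms in_Fk_degree_parts unfolding Fspace_def by blast+

lemma normk_degree_gt_part_le:
  assumes "in_Fk k x"
  shows "in_Fk (2 * k) (degree_gt_part N x)"
    and "normk (2 * k) (degree_gt_part N x) \<le> normk k x / 2 ^ Suc N"
proof -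
  have "norm (degree_gt_part N x \<alpha>) / real (2 * k) ^ mlen \<alpha> \<le> normk k x / 2 ^ Suc N" for \<alpha>
  proof (cases "mlen \<alpha> \<le> N")
    case True
    then show ?thesis using normk_nonneg[OF assms] by (simp add: degree_gt_part_def)
  next
    case False
    have "norm (degree_gt_part N x \<alpha>) / real (2 * k) ^ mlen \<alpha>
        = (norm (x \<alpha>) / real k ^ mlen \<alpha>) / 2 ^ mlen \<alpha>"
      using False by (simp add: degree_gt_part_def power_mult_distrib)
    also have "\<dots> \<le> normk k x / 2 ^ mlen \<alpha>"
      by (rule divide_right_mono[OF normk_upper[OF assms]]) simp
    also have "\<dots> \<le> normk k x / 2 ^ Suc N"
      using False normk_nonneg[OF assms] by (intro divide_left_mono power_increasing) auto
    finally show ?thesis .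
  qed
  then show "in_Fk (2 * k) (degree_gt_part N x)"
    and "normk (2 * k) (degree_gt_part N x) \<le> normk k x / 2 ^ Suc N"
    by (rule in_Fk_normk_le)+
qed

context
  fixes p :: "(('d::finite \<Rightarrow> nat) \<Rightarrow> 'a::real_normed_vector) \<Rightarrow> real"
    and D :: "nat \<Rightarrow> real" and \<delta> :: "nat \<Rightarrow> real"
  assumes p_add_le: "\<And>x y. x \<in> Fspace \<Longrightarrow> y \<in> Fspace \<Longrightarrow> p (\<lambda>\<alpha>. x \<alpha> + y \<alpha>) \<le> p x + p y"
    and p_le_normk: "\<And>k x. 1 \<le> k \<Longrightarrow> in_Fk k x \<Longrightarrow> p x \<le> D k * normk k x"
    and D_ge_1: "\<And>k. 1 \<le> D k"
    and \<delta>_pos: "\<And>n. 0 < \<delta> n" and \<delta>_null: "\<delta> \<longlonglongrightarrow> 0"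
    and \<delta>_dominates: "\<And>n. \<exists>j\<ge>1. D j / real j ^ n \<le> D 1 * (\<delta> n / 2) ^ n"
begin

lemma \<delta>_nonneg: "0 \<le> \<delta> n"
  using \<delta>_pos less_imp_le by blast

lemma p_degree_part_le:
  assumes "x \<in> Fspace"
  shows "p (degree_part n x) \<le> D 1 / 2 ^ n * delta_norm \<delta> x"
proof -
  obtain j where j: "1 \<le> j" "D j / real j ^ n \<le> D 1 * (\<delta> n / 2) ^ n"
    using \<delta>_dominates by blast
  define d where "d = delta_norm \<delta> x"
  have d_nonneg: "0 \<le> d" unfolding d_def by (rule delta_norm_nonneg[OF assms \<delta>_nonneg \<delta>_null])
  have jn_pos: "0 < (real j * \<delta> n) ^ n" using j(1) \<delta>_pos by simp
  have "norm (degree_part n x \<alpha>) / real j ^ mlen \<alpha> \<le> d / (real j * \<delta> n) ^ n" for \<alpha>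
  proof (cases "mlen \<alpha> = n")
    case True
    have "norm (x \<alpha>) / real j ^ n = norm (x \<alpha>) * \<delta> n ^ n / (real j * \<delta> n) ^ n"
      using j(1) \<delta>_pos[of n] by (simp add: power_mult_distrib)
    also have "\<dots> \<le> d / (real j * \<delta> n) ^ n"
      using delta_norm_upper[OF assms \<delta>_nonneg \<delta>_null, of \<alpha>] True jn_pos
      by (simp add: d_def divide_right_mono)
    finally show ?thesis using True by (simp add: degree_part_def)
  qed (use d_nonneg jn_pos in \<open>simp add: degree_part_def\<close>)
  note part_bound = in_Fk_normk_le[OF this]
  have "p (degree_part n x) \<le> D j * normk j (degree_part n x)"
    by (rule p_le_normk[OF j(1) part_bound(1)])
  also have "\<dots> \<le> D j * (d / (real j * \<delta> n) ^ n)"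
    by (rule mult_left_mono[OF part_bound(2)]) (use D_ge_1[of j] in simp)
  also have "\<dots> = D j / real j ^ n * d / \<delta> n ^ n" by (simp add: power_mult_distrib)
  also have "\<dots> \<le> D 1 * (\<delta> n / 2) ^ n * d / \<delta> n ^ n"
    using j(2) d_nonneg \<delta>_pos[of n] by (intro divide_right_mono mult_right_mono) auto
  also have "\<dots> = D 1 / 2 ^ n * d" using \<delta>_pos[of n] by (simp add: power_divide)
  finally show ?thesis by (simp add: d_def)
qed

lemma p_degree_le_part_le:
  assumes "x \<in> Fspace"
  shows "p (degree_le_part N x) \<le> (2 - 1 / 2 ^ N) * (D 1 * delta_norm \<delta> x)"
proof (induction N)
  case 0
  then show ?case using p_degree_part_le[OF assms, of 0] by (simp add: degree_le_part_0)
next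
  case (Suc N)
  have "p (degree_le_part (Suc N) x) \<le> p (degree_le_part N x) + p (degree_part (Suc N) x)"
    unfolding degree_le_part_Suc by (intro p_add_le Fspace_degree_parts[OF assms])
  also have "\<dots> \<le> (2 - 1 / 2 ^ N) * (D 1 * delta_norm \<delta> x) + D 1 / 2 ^ Suc N * delta_norm \<delta> x"
    using Suc.IH p_degree_part_le[OF assms] by (rule add_mono)
  also have "\<dots> = (2 - 1 / 2 ^ Suc N) * (D 1 * delta_norm \<delta> x)"
    by (simp add: field_simps)
  finally show ?case .
qed

lemma p_le_delta_norm:
  assumes "x \<in> Fspace"
  shows "p x \<le> 2 * D 1 * delta_norm \<delta> x"
proof -
  obtain k where k: "1 \<le> k" "in_Fk k x" using assms unfolding Fspace_def by blast
  have k2: "1 \<le> 2 * k" using k(1) by simp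
  have nonneg: "0 \<le> D 1 * delta_norm \<delta> x"
    using D_ge_1[of 1] delta_norm_nonneg[OF assms \<delta>_nonneg \<delta>_null] by simp
  \<comment> \<open>\<open>p\<close> is only subadditive, so \<open>x\<close> is split into finitely many pieces: its parts of
    degree \<open>\<le> N\<close>, and a tail that is small in \<open>F\<^sub>2\<^sub>k\<close> (not in \<open>F\<^sub>k\<close>).\<close>
  have "p x \<le> 2 * D 1 * delta_norm \<delta> x + D (2 * k) * normk k x / 2 ^ N" for N
  proof -
    note tail = normk_degree_gt_part_le[OF k(2), of N]
    have "p x \<le> p (degree_le_part N x) + p (degree_gt_part N x)"
      using p_add_le[OF Fspace_degree_parts(2)[OF assms, of N] FspaceI[OF tail(1) k2]]
      by (simp add: degree_le_part_add_degree_gt_part)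
    also have "p (degree_le_part N x) \<le> 2 * D 1 * delta_norm \<delta> x"
      using p_degree_le_part_le[OF assms, of N] mult_right_mono[OF _ nonneg, of "2 - 1 / 2 ^ N" 2]
      by simp
    also have "p (degree_gt_part N x) \<le> D (2 * k) * (normk k x / 2 ^ Suc N)"
      using p_le_normk[OF k2 tail(1)] mult_left_mono[OF tail(2), of "D (2 * k)"] D_ge_1[of "2 * k"]
      by linarith
    also have "\<dots> \<le> D (2 * k) * normk k x / 2 ^ N"
      using D_ge_1[of "2 * k"] normk_nonneg[OF k(2)] by (simp add: field_simps)
    finally show ?thesis by simp
  qed
  moreover have "(\<lambda>N. 2 * D 1 * delta_norm \<delta> x + D (2 * k) * normk k x / 2 ^ N)
      \<longlonglongrightarrow> 2 * D 1 * delta_norm \<delta> x"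
    using tendsto_add[OF tendsto_const LIMSEQ_divide_realpow_zero[of 2 "D (2 * k) * normk k x"]]
    by simp
  ultimately show ?thesis using LIMSEQ_le_const by blast
qed

end

lemma continuous_seminorm_le_delta_norm:
  fixes p :: "(('d::finite \<Rightarrow> nat) \<Rightarrow> 'a::real_normed_vector) \<Rightarrow> real"
  assumes "continuous_seminorm_on_F p"
  shows "\<exists>\<delta>. (\<forall>n. 0 < \<delta> n) \<and> \<delta> \<longlonglongrightarrow> 0 \<and> (\<exists>C. \<forall>x\<in>Fspace. p x \<le> C * delta_norm \<delta> x)"
proof -
  have p_add_le: "\<And>x y. x \<in> Fspace \<Longrightarrow> y \<in> Fspace \<Longrightarrow> p (\<lambda>\<alpha>. x \<alpha> + y \<alpha>) \<le> p x + p y"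
    using assms unfolding continuous_seminorm_on_F_def seminorm_on_F_def by blast
  have "\<forall>k. \<exists>c. 1 \<le> k \<longrightarrow> (\<forall>x. in_Fk k x \<longrightarrow> p x \<le> c * normk k x)"
    using assms unfolding continuous_seminorm_on_F_def by blast
  then obtain C where C: "\<And>k x. 1 \<le> k \<Longrightarrow> in_Fk k x \<Longrightarrow> p x \<le> C k * normk k x"
    by metis
  define D where "D k = max 1 (C k)" for k
  have p_le_normk: "p x \<le> D k * normk k x" if "1 \<le> k" "in_Fk k x" for k x
    using C[OF that] mult_right_mono[OF _ normk_nonneg[OF that(2)], of "C k" "D k"]
    by (simp add: D_def)
  have D_ge_1: "\<And>k. 1 \<le> D k" by (simp add: D_def)
  note \<delta> = dominating_weight_pos[of D, OF D_ge_1] dominating_weight_null[of D, OF D_ge_1]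
    dominating_weight_dominates[of D, OF D_ge_1]
  have "p x \<le> 2 * D 1 * delta_norm (dominating_weight D) x" if "x \<in> Fspace" for x
    by (rule p_le_delta_norm[OF p_add_le p_le_normk D_ge_1 \<delta> that])
  with \<delta>(1,2) show ?thesis by blast
qed

theorem lemma1:
  shows "(\<forall>\<delta>::nat \<Rightarrow> real. (\<forall>n. \<delta> n > 0) \<and> \<delta> \<longlonglongrightarrow> 0 \<longrightarrow>
            continuous_seminorm_on_F (delta_norm \<delta> :: (('d::finite \<Rightarrow> nat) \<Rightarrow> 'a::banach) \<Rightarrow> real)) \<and>
         (\<forall>p :: (('d \<Rightarrow> nat) \<Rightarrow> 'a) \<Rightarrow> real. continuous_seminorm_on_F p \<longrightarrow>
            (\<exists>\<delta>::nat \<Rightarrow> real. (\<forall>n. \<delta> n > 0) \<and> \<delta> \<longlonglongrightarrow> 0 \<and>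
               (\<exists>C. \<forall>x\<in>Fspace. p x \<le> C * delta_norm \<delta> x)))"
proof (intro conjI allI impI)
  fix \<delta> :: "nat \<Rightarrow> real"
  assume "(\<forall>n. \<delta> n > 0) \<and> \<delta> \<longlonglongrightarrow> 0"
  then show "continuous_seminorm_on_F (delta_norm \<delta> :: (('d \<Rightarrow> nat) \<Rightarrow> 'a) \<Rightarrow> real)"
    by (intro continuous_seminorm_delta_norm) (auto simp: less_imp_le)
qed (rule continuous_seminorm_le_delta_norm)

end
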